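(* For positive integers $x$ and $y$, $$\binom{y}{2} + \binom{\lceil 2x/y \rceil}{2} < x + y - 1$$ holds if and only if either $y = 2$ and $x \in \{1,2\}$, or $y = 3$ and $x = 3$.
   Context: $\binom{m}{2} = m(m-1)/2$ for a nonnegative integer $m$, and $\lceil \cdot \rceil$ is the ceiling function. *)

theory Defs
  imports Complex_Main
begin

end

theory Submission
  imports Defs
begin

(* With c = ceil (2x/y) we have 2x <= c y, so the inequality forces
   y (y - 1) + c (c - 1) < c y + 2 y - 2, which after completing squares reads
   (y - c)^2 + (y - 3)^2 + (c - 1)^2 < 6.  Hence y <= 5 and c <= 3, and the
   remaining cases are settled by c y < 2x + y and direct computation. *)

lemma double_choose_two: "2 * (n choose 2) = n * (n - 1)"
  by (cases n) (simp_all add: choose_two)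

lemma of_nat_double_choose_two: "2 * int (n choose 2) = int n * (int n - 1)"
proof -
  have "int (2 * (n choose 2)) = int (n * (n - 1))"
    by (simp only: double_choose_two)
  then show ?thesis by (cases n) (simp_all add: algebra_simps)
qed

lemma nat_ceiling_divide_bounds:
  fixes m n :: nat
  assumes "0 < n"
  shows "m \<le> nat \<lceil>real m / real n\<rceil> * n" and "nat \<lceil>real m / real n\<rceil> * n < m + n"
proof -
  define c where "c = nat \<lceil>real m / real n\<rceil>"
  have "of_int \<lceil>real m / real n\<rceil> = real c"
    unfolding c_def by simp
  then have "real m \<le> real c * real n" and "(real c - 1) * real n < real m"
    using assms ceiling_divide_upper [of "real n" "real m"] ceiling_divide_lower [of "real n" "real m"]
    by simp_all
  then have "real m \<le> real (c * n)" and "real (c * n) < real (m + n)"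
    by (simp_all add: left_diff_distrib)
  then show "m \<le> c * n" and "c * n < m + n"
    by (simp_all only: of_nat_le_iff of_nat_less_iff)
qed

lemma quadratic_lt_imp_bounded:
  fixes y c :: int
  assumes "y * (y - 1) + c * (c - 1) < c * y + 2 * y - 2"
  shows "y \<le> 5" and "c \<le> 3"
proof -
  have squares: "(y - c)^2 + (y - 3)^2 + (c - 1)^2 < 6"
    using assms by (simp add: power2_eq_square algebra_simps)
  have "(y - 3)^2 < 9"
    using squares zero_le_power2 [of "y - c"] zero_le_power2 [of "c - 1"] by linarith
  then have "\<bar>y - 3\<bar> < 3"
    using abs_le_square_iff [of 3 "y - 3"] by auto
  have "(c - 1)^2 < 9"
    using squares zero_le_power2 [of "y - c"] zero_le_power2 [of "y - 3"] by linarith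
  then have "\<bar>c - 1\<bar> < 3"
    using abs_le_square_iff [of 3 "c - 1"] by auto
  with \<open>\<bar>y - 3\<bar> < 3\<close> show "y \<le> 5" and "c \<le> 3"
    by simp_all
qed

lemma choose_two_add_lt_cases:
  fixes x y c :: nat
  assumes lower: "2 * x \<le> c * y" and upper: "c * y < 2 * x + y"
    and lt: "(y choose 2) + (c choose 2) < x + y - 1"
  shows "(y = 2 \<and> x \<in> {1, 2}) \<or> (y = 3 \<and> x = 3)"
proof -
  have "2 * int x \<le> int c * int y"
    using lower by (simp flip: of_nat_mult)
  with lt have "int y * (int y - 1) + int c * (int c - 1) < int c * int y + 2 * int y - 2"
    unfolding of_nat_double_choose_two [symmetric] by linarith
  then have "y \<le> 5" and "c \<le> 3"
    using quadratic_lt_imp_bounded by fastforce+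
  then have "y \<in> {0, 1, 2, 3, 4, 5}" and "c \<in> {0, 1, 2, 3}"
    by auto
  then show ?thesis
    using lower upper lt by (auto simp: choose_two)
qed

theorem lemma2:
  fixes x y :: nat
  assumes "x > 0" and "y > 0"
  shows "(y choose 2) + (nat \<lceil>real (2 * x) / real y\<rceil> choose 2) < x + y - 1
         \<longleftrightarrow> (y = 2 \<and> x \<in> {1, 2}) \<or> (y = 3 \<and> x = 3)"
proof
  assume "(y choose 2) + (nat \<lceil>real (2 * x) / real y\<rceil> choose 2) < x + y - 1"
  with nat_ceiling_divide_bounds [OF \<open>y > 0\<close>, of "2 * x"]
  show "(y = 2 \<and> x \<in> {1, 2}) \<or> (y = 3 \<and> x = 3)"
    by (rule choose_two_add_lt_cases)
next
  assume "(y = 2 \<and> x \<in> {1, 2}) \<or> (y = 3 \<and> x = 3)"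
  then show "(y choose 2) + (nat \<lceil>real (2 * x) / real y\<rceil> choose 2) < x + y - 1"
    by (auto simp: choose_two)
qed

end
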